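(* Let $K \geq 2$ be an integer and $\epsilon > 0$ small. For $x$ large put $$L = \lfloor (\log\log\log x)^{\frac13 - \epsilon}\rfloor + 1,\qquad Q = \exp\big((\log\log x)^{1-\epsilon}\big),\qquad M = \lfloor 16K^2 \rfloor + 1.$$ Suppose $p_1, \dots, p_T$ are distinct primes in the interval $[\exp((\log Q)^{\frac{4}{ML}}), Q]$ with $T \geq (2ML^2)^2$ and $$\frac12 (\log Q)^{\frac{1}{ML}} \leq \prod_{t=1}^{T}\left(1 - \frac{1}{p_t}\right)^{-1} \leq \frac32 (\log Q)^{\frac{1}{ML}}.$$ For $I \subseteq \{1,\dots,T\}$ let $m_I = \prod_{t\in I} p_t$, and let $$\mathcal{H} = \{0 \leq h \leq K\log x : h \not\equiv |I| - 1 \pmod{m_I} \text{ for every } I \subseteq \{1,\dots,T\} \text{ with } 1 \leq |I| \leq 2ML^2\}.$$ Then there is a constant $C = C(K,\epsilon)>0$ such that for all sufficiently large $x$ (depending only on $K,\epsilon$), and every such choice of primes, $$|\mathcal{H}| \leq C\,\frac{(16ML^2)^{8M^2L^4}(\log\log Q)^{4M^2L^4}}{(\log Q)^{2L}}\cdot K\log x.$$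
   Context: Here $h$ ranges over integers; $|I|$ denotes the cardinality of $I$. *)

theory Defs
  imports Complex_Main "HOL-Computational_Algebra.Primes" "HOL-Number_Theory.Cong"
begin

definition Lpar :: "real \<Rightarrow> real \<Rightarrow> nat" where
  "Lpar eps x = nat \<lfloor>(ln (ln (ln x))) powr (1/3 - eps)\<rfloor> + 1"

definition Qpar :: "real \<Rightarrow> real \<Rightarrow> real" where
  "Qpar eps x = exp ((ln (ln x)) powr (1 - eps))"

definition Mpar :: "int \<Rightarrow> nat" where
  "Mpar K = nat \<lfloor>16 * real_of_int K ^ 2\<rfloor> + 1"

definition mI :: "(nat \<Rightarrow> nat) \<Rightarrow> nat set \<Rightarrow> int" where
  "mI p I = (\<Prod>t\<in>I. int (p t))"

definition Hset :: "int \<Rightarrow> real \<Rightarrow> nat \<Rightarrow> nat \<Rightarrow> (nat \<Rightarrow> nat) \<Rightarrow> nat \<Rightarrow> int set" where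
  "Hset K x M L p T = {h::int. 0 \<le> h \<and> real_of_int h \<le> real_of_int K * ln x \<and>
      (\<forall>I. I \<subseteq> {1..T} \<and> 1 \<le> card I \<and> card I \<le> 2 * M * L^2 \<longrightarrow>
           \<not> [h = int (card I) - 1] (mod mI p I))}"

end

theory Submission
  imports Defs
begin

text \<open>
  Proof of the upper bound for the sieved set \<open>H\<close>.  Write \<open>J = 2ML\<^sup>2\<close>.

  (1) Combinatorial reduction: if \<open>h \<in> H\<close> then for every \<open>j < J\<close> at most \<open>j\<close> of the
      primes satisfy \<open>h mod p\<^sub>t = j\<close> (otherwise \<open>j + 1\<close> of them form a set \<open>I\<close> with
      \<open>h \<equiv> |I| - 1 (mod m\<^sub>I)\<close> by the Chinese remainder theorem); hence at most \<open>J\<^sup>2\<close>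
      primes satisfy \<open>h mod p\<^sub>t < J\<close>  (\<open>Hset_subset_few_hits\<close>).
  (2) Sieve: numbers \<open>h < N\<close> with at most \<open>k\<close> such "hits" are counted by a weighted
      Bonferroni inequality with weight \<open>z = 1 / log log Q\<close>; averaging over \<open>h\<close> uses
      exact CRT counts of the sets \<open>{h : h mod p\<^sub>t < J for t \<in> S}\<close>  (\<open>sieve_core\<close>).
  (3) Mertens-type estimate: the hypothesis on \<open>\<Prod>(1 - 1/p\<^sub>t)\<^sup>-\<^sup>1\<close> pins
      \<open>\<Sum>1/p\<^sub>t\<close> to within \<open>2\<close> of \<open>\<lambda> = log log Q / (ML)\<close>; this makes the main sieve term
      \<open>\<approx> e\<^sup>-\<^sup>J\<^sup>\<lambda> = (log Q)\<^sup>-\<^sup>2\<^sup>L\<close>, while the Bonferroni tail and the CRT error terms are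
      smaller once the truncation level \<open>n\<close> is \<open>\<approx> 18J(\<lambda> + 1)\<close>  (\<open>sieve_bound_explicit\<close>,
      \<open>Hset_bound_explicit\<close>).
  (4) Asymptotics: for \<open>x\<close> large in terms of \<open>K\<close> and \<open>\<epsilon>\<close> all side conditions of the
      deterministic bound hold (\<open>Hset_bound_large_x\<close>), giving the theorem with \<open>C = 3\<close>.
\<close>

section \<open>Elementary symmetric functions and the Bonferroni inequalities\<close>

definition esym :: "('a \<Rightarrow> real) \<Rightarrow> 'a set \<Rightarrow> nat \<Rightarrow> real" where
  "esym x A i = (\<Sum>S\<in>{S. S \<subseteq> A \<and> card S = i}. \<Prod>t\<in>S. x t)"

definition bsum :: "('a \<Rightarrow> real) \<Rightarrow> 'a set \<Rightarrow> nat \<Rightarrow> real" where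
  "bsum x A n = (\<Sum>i<n. (-1)^i * esym x A i)"

lemma esym_0: "finite A \<Longrightarrow> esym x A 0 = 1"
proof -
  assume "finite A"
  hence "{S. S \<subseteq> A \<and> card S = 0} = {{}}"
    using card_eq_0_iff finite_subset by fastforce
  thus ?thesis by (simp add: esym_def)
qed

lemma esym_empty_Suc: "esym x {} (Suc i) = 0"
proof -
  have "{S. S \<subseteq> {} \<and> card S = Suc i} = {}" by auto
  thus ?thesis by (simp add: esym_def)
qed

lemma subsets_insert_card_Suc:
  assumes "finite A" "a \<notin> A"
  shows "{S. S \<subseteq> insert a A \<and> card S = Suc i} =
     {S. S \<subseteq> A \<and> card S = Suc i} \<union> insert a ` {S. S \<subseteq> A \<and> card S = i}"
proof (intro equalityI subsetI)
  fix S assume "S \<in> {S. S \<subseteq> insert a A \<and> card S = Suc i}"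
  hence S: "S \<subseteq> insert a A" "card S = Suc i" by auto
  have fS: "finite S" using S assms(1) finite_subset by blast
  show "S \<in> {S. S \<subseteq> A \<and> card S = Suc i} \<union> insert a ` {S. S \<subseteq> A \<and> card S = i}"
  proof (cases "a \<in> S")
    case True
    have "S = insert a (S - {a})" using True by auto
    moreover have "S - {a} \<subseteq> A" "card (S - {a}) = i" using S True fS by auto
    ultimately show ?thesis by blast
  qed (use S in auto)
next
  fix S assume "S \<in> {S. S \<subseteq> A \<and> card S = Suc i} \<union> insert a ` {S. S \<subseteq> A \<and> card S = i}"
  thus "S \<in> {S. S \<subseteq> insert a A \<and> card S = Suc i}"
  proof
    assume "S \<in> insert a ` {S. S \<subseteq> A \<and> card S = i}"
    then obtain R where R: "R \<subseteq> A" "card R = i" "S = insert a R" by auto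
    have "finite R" using R assms(1) finite_subset by blast
    moreover have "a \<notin> R" using R assms(2) by auto
    ultimately show ?thesis using R by auto
  qed auto
qed

lemma esym_insert:
  assumes "finite A" "a \<notin> A"
  shows "esym x (insert a A) (Suc i) = esym x A (Suc i) + x a * esym x A i"
proof -
  have disj: "{S. S \<subseteq> A \<and> card S = Suc i} \<inter> insert a ` {S. S \<subseteq> A \<and> card S = i} = {}"
    using assms(2) by auto
  have inj: "inj_on (insert a) {S. S \<subseteq> A \<and> card S = i}"
    unfolding inj_on_def using assms(2) by (metis (no_types, lifting) insert_ident mem_Collect_eq subset_iff)
  have "esym x (insert a A) (Suc i) = (\<Sum>S\<in>{S. S \<subseteq> A \<and> card S = Suc i}. \<Prod>t\<in>S. x t)
        + (\<Sum>S\<in>insert a ` {S. S \<subseteq> A \<and> card S = i}. \<Prod>t\<in>S. x t)"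
    unfolding esym_def subsets_insert_card_Suc[OF assms]
    by (rule sum.union_disjoint) (use assms(1) disj in auto)
  also have "(\<Sum>S\<in>insert a ` {S. S \<subseteq> A \<and> card S = i}. \<Prod>t\<in>S. x t)
       = (\<Sum>S\<in>{S. S \<subseteq> A \<and> card S = i}. \<Prod>t\<in>insert a S. x t)"
    by (rule sum.reindex[OF inj, unfolded comp_def])
  also have "\<dots> = (\<Sum>S\<in>{S. S \<subseteq> A \<and> card S = i}. x a * (\<Prod>t\<in>S. x t))"
  proof (rule sum.cong)
    fix S assume "S \<in> {S. S \<subseteq> A \<and> card S = i}"
    hence "finite S" "a \<notin> S" using assms finite_subset by auto
    thus "(\<Prod>t\<in>insert a S. x t) = x a * (\<Prod>t\<in>S. x t)" by simp
  qed simp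
  finally show ?thesis by (simp add: esym_def sum_distrib_left)
qed

text \<open>Adding one weight \<open>x a\<close> multiplies the product by \<open>1 - x a\<close>; the truncated sums
  follow the same recursion, one level lower.\<close>

lemma bsum_insert:
  assumes "finite A" "a \<notin> A"
  shows "bsum x (insert a A) (Suc m) = bsum x A (Suc m) - x a * bsum x A m"
proof -
  have "bsum x (insert a A) (Suc m) = 1 + (\<Sum>i<m. (-1)^(Suc i) * esym x (insert a A) (Suc i))"
    unfolding bsum_def sum.lessThan_Suc_shift using assms esym_0[of "insert a A"] by simp
  also have "\<dots> = 1 + (\<Sum>i<m. (-1)^(Suc i) * esym x A (Suc i)) - x a * (\<Sum>i<m. (-1)^i * esym x A i)"
    by (simp add: esym_insert[OF assms] algebra_simps sum.distrib sum_distrib_left sum_subtractf)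
  also have "\<dots> = bsum x A (Suc m) - x a * bsum x A m"
    unfolding bsum_def sum.lessThan_Suc_shift using assms esym_0[of A] by simp
  finally show ?thesis .
qed

lemma bonferroni:
  assumes "finite A" "\<And>t. t \<in> A \<Longrightarrow> 0 \<le> x t \<and> x t \<le> 1"
  shows "0 \<le> (-1)^n * ((\<Prod>t\<in>A. 1 - x t) - bsum x A n) \<and>
         (-1)^n * ((\<Prod>t\<in>A. 1 - x t) - bsum x A n) \<le> esym x A n"
  using assms
proof (induction A arbitrary: n rule: finite_induct)
  case empty
  show ?case
  proof (cases n)
    case 0 thus ?thesis by (simp add: bsum_def esym_0)
  next
    case (Suc m)
    have "bsum x {} n = 1"
      unfolding Suc bsum_def sum.lessThan_Suc_shift by (simp add: esym_0 esym_empty_Suc)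
    thus ?thesis using Suc by (simp add: esym_empty_Suc)
  qed
next
  case (insert a A)
  have bnd: "\<And>t. t \<in> A \<Longrightarrow> 0 \<le> x t \<and> x t \<le> 1" using insert.prems by auto
  have xa: "0 \<le> x a" "x a \<le> 1" using insert.prems by auto
  show ?case
  proof (cases n)
    case 0
    have "0 \<le> (\<Prod>t\<in>insert a A. 1 - x t)" "(\<Prod>t\<in>insert a A. 1 - x t) \<le> 1"
      by (intro prod_nonneg prod_le_1; use insert.prems in force)+
    thus ?thesis using 0 insert by (simp add: bsum_def esym_0)
  next
    case (Suc m)
    define R where "R k = (\<Prod>t\<in>A. 1 - x t) - bsum x A k" for k
    have IH1: "0 \<le> (-1)^Suc m * R (Suc m)" "(-1)^Suc m * R (Suc m) \<le> esym x A (Suc m)"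
      using insert.IH[OF bnd, of "Suc m"] by (auto simp: R_def)
    have IH2: "0 \<le> (-1)^m * R m" "(-1)^m * R m \<le> esym x A m"
      using insert.IH[OF bnd, of m] by (auto simp: R_def)
    have key: "(-1)^n * ((\<Prod>t\<in>insert a A. 1 - x t) - bsum x (insert a A) n)
        = (-1)^Suc m * R (Suc m) + x a * ((-1)^m * R m)"
      unfolding Suc R_def using insert(1,2) by (simp add: bsum_insert algebra_simps)
    have "x a * ((-1)^m * R m) \<le> x a * esym x A m" using IH2 xa by (simp add: mult_left_mono)
    moreover have "0 \<le> x a * ((-1)^m * R m)" using IH2 xa by simp
    ultimately show ?thesis unfolding key using IH1 Suc esym_insert[OF insert(1,2)] by auto
  qed
qed

lemma bonferroni_odd:
  assumes "finite A" "\<And>t. t \<in> A \<Longrightarrow> 0 \<le> x t \<and> x t \<le> 1" "odd n"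
  shows "(\<Prod>t\<in>A. 1 - x t) \<le> bsum x A n" "bsum x A n \<le> (\<Prod>t\<in>A. 1 - x t) + esym x A n"
proof -
  have "(-1::real)^n = -1" using assms(3) by simp
  thus "(\<Prod>t\<in>A. 1 - x t) \<le> bsum x A n" "bsum x A n \<le> (\<Prod>t\<in>A. 1 - x t) + esym x A n"
    using bonferroni[of A x n] assms(1,2) by auto
qed

lemma power_add_ge_linear:
  fixes s y :: real
  assumes "0 \<le> s" "0 \<le> y"
  shows "s^(Suc m) + real (Suc m) * y * s^m \<le> (s + y)^(Suc m)"
proof (induction m)
  case (Suc m)
  have "s^(Suc (Suc m)) + real (Suc (Suc m)) * y * s^(Suc m)
      \<le> (s + y) * (s^(Suc m) + real (Suc m) * y * s^m)"
    using assms by (simp add: algebra_simps)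
  also have "\<dots> \<le> (s + y) * (s + y)^(Suc m)"
    using Suc assms by (intro mult_left_mono) auto
  finally show ?case by simp
qed simp

lemma esym_fact_le:
  assumes "finite A" "\<And>t. t \<in> A \<Longrightarrow> 0 \<le> x t"
  shows "esym x A n * fact n \<le> (sum x A)^n"
  using assms
proof (induction A arbitrary: n rule: finite_induct)
  case empty thus ?case by (cases n) (auto simp: esym_0 esym_empty_Suc)
next
  case (insert a A)
  have nn: "\<And>t. t \<in> A \<Longrightarrow> 0 \<le> x t" and xa: "0 \<le> x a" using insert.prems by auto
  have s: "0 \<le> sum x A" using nn by (simp add: sum_nonneg)
  show ?case
  proof (cases n)
    case 0 thus ?thesis using insert by (simp add: esym_0)
  next
    case (Suc m)
    have "esym x (insert a A) n * fact n
        = esym x A (Suc m) * fact (Suc m) + real (Suc m) * x a * (esym x A m * fact m)"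
      unfolding Suc using esym_insert[OF insert(1,2)] by (simp add: algebra_simps)
    also have "\<dots> \<le> (sum x A)^(Suc m) + real (Suc m) * x a * (sum x A)^m"
      using insert.IH[OF nn, of "Suc m"] insert.IH[OF nn, of m] xa
      by (intro add_mono mult_left_mono) auto
    also have "\<dots> \<le> (sum x A + x a)^(Suc m)" using power_add_ge_linear[OF s xa] by simp
    finally show ?thesis using insert Suc by (simp add: add.commute)
  qed
qed

lemma power_div_fact_le_exp:
  fixes a :: real
  assumes "0 \<le> a"
  shows "a ^ n / fact n \<le> exp a"
proof -
  have s: "summable (\<lambda>k. a ^ k /\<^sub>R fact k)" using exp_converges[of a] sums_summable by blast
  have "(\<Sum>k\<in>{n}. a ^ k /\<^sub>R fact k) \<le> (\<Sum>k. a ^ k /\<^sub>R fact k)"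
    by (rule sum_le_suminf[OF s]) (use assms in auto)
  also have "\<dots> = exp a" using exp_converges[of a] sums_unique by metis
  finally show ?thesis by (simp add: divide_inverse mult.commute)
qed

lemma esym_le_exp:
  assumes "finite A" "\<And>t. t \<in> A \<Longrightarrow> 0 \<le> x t" "sum x A \<le> s" "8 * s + B \<le> real n"
  shows "esym x A n \<le> exp (- B)"
proof -
  have s0: "0 \<le> s" using assms(2,3) sum_nonneg[of A x] by fastforce
  have "esym x A n \<le> (sum x A)^n / fact n"
    using esym_fact_le[OF assms(1,2)] by (simp add: field_simps)
  also have "\<dots> \<le> s^n / fact n"
    using assms(2,3) by (intro divide_right_mono power_mono sum_nonneg) auto
  also have "\<dots> = ((8 * s)^n / fact n) / 8^n" by (simp add: power_mult_distrib)
  also have "\<dots> \<le> exp (8 * s) / exp 1 ^ n"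
  proof (rule frac_le)
    show "(8 * s)^n / fact n \<le> exp (8 * s)" using s0 by (intro power_div_fact_le_exp) simp
    show "exp 1 ^ n \<le> (8::real)^n" using exp_le by (intro power_mono) auto
  qed simp_all
  also have "\<dots> = exp (8 * s - real n)" by (simp add: exp_diff exp_of_nat_mult[symmetric])
  also have "\<dots> \<le> exp (- B)" using assms(4) by simp
  finally show ?thesis .
qed

section \<open>Counting residues with the Chinese remainder theorem\<close>

definition good :: "(nat \<Rightarrow> nat) \<Rightarrow> nat \<Rightarrow> nat set \<Rightarrow> nat \<Rightarrow> bool" where
  "good p J S h \<longleftrightarrow> (\<forall>t\<in>S. h mod p t < J)"

definition mS :: "(nat \<Rightarrow> nat) \<Rightarrow> nat set \<Rightarrow> nat" where
  "mS p S = (\<Prod>t\<in>S. p t)"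

lemma mS_pos: "\<forall>t\<in>S. prime (p t) \<Longrightarrow> 0 < mS p S"
  unfolding mS_def by (metis prime_gt_0_nat prod_pos)

lemma good_mod: "finite S \<Longrightarrow> good p J S (h mod mS p S) = good p J S h"
  unfolding good_def mS_def by (auto simp: mod_mod_cancel dvd_prodI)

lemma good_periodic: "finite S \<Longrightarrow> good p J S (h + mS p S) = good p J S h"
  by (metis good_mod mod_add_self2)

lemma coprime_mS:
  assumes "finite S" "\<forall>t\<in>insert a S. prime (p t)" "inj_on p (insert a S)" "a \<notin> S"
  shows "coprime (p a) (mS p S)"
proof -
  have pa: "prime (p a)" using assms by auto
  have "\<not> p a dvd mS p S"
  proof
    assume "p a dvd mS p S"
    then obtain t where t: "t \<in> S" "p a dvd p t" unfolding mS_def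
      using prime_dvd_prod_iff[OF assms(1) pa] by auto
    hence "p a = p t" using assms(2) pa by (auto simp: primes_dvd_imp_eq)
    thus False using assms(3,4) t by (metis inj_on_contraD insertCI)
  qed
  thus ?thesis using pa prime_imp_coprime by blast
qed

lemma crt_bij:
  fixes q m :: nat
  assumes "coprime q m" "0 < q" "0 < m"
  shows "bij_betw (\<lambda>h. (h mod q, h mod m)) {..<q * m} ({..<q} \<times> {..<m})"
proof -
  have inj: "inj_on (\<lambda>h. (h mod q, h mod m)) {..<q * m}"
  proof (rule inj_onI)
    fix h h' assume h: "h \<in> {..<q * m}" "h' \<in> {..<q * m}"
      and "(h mod q, h mod m) = (h' mod q, h' mod m)"
    hence "[h = h'] (mod q)" "[h = h'] (mod m)" by (auto simp: cong_def)
    hence "[h = h'] (mod q * m)" using assms(1) by (simp add: coprime_cong_mult_nat)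
    thus "h = h'" using h cong_less_modulus_unique_nat by auto
  qed
  have "(\<lambda>h. (h mod q, h mod m)) ` {..<q * m} \<subseteq> {..<q} \<times> {..<m}" using assms by auto
  moreover have "card ((\<lambda>h. (h mod q, h mod m)) ` {..<q * m}) = card ({..<q} \<times> {..<m})"
    using card_image[OF inj] by (simp add: card_cartesian_product)
  ultimately show ?thesis using inj unfolding bij_betw_def by (simp add: card_subset_eq)
qed

lemma card_bij_betw_Collect:
  assumes "bij_betw f D C"
  shows "card {h\<in>D. P (f h)} = card {z\<in>C. P z}"
proof (rule bij_betw_same_card)
  show "bij_betw f {h\<in>D. P (f h)} {z\<in>C. P z}"
    using assms unfolding bij_betw_def inj_on_def by force
qed

lemma crt_count:
  assumes "finite S" "\<forall>t\<in>S. prime (p t) \<and> J \<le> p t" "inj_on p S"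
  shows "card {h. h < mS p S \<and> good p J S h} = J ^ card S"
  using assms
proof (induction S rule: finite_induct)
  case empty
  have "{h. h < mS p {} \<and> good p J {} h} = {0}" by (auto simp: mS_def good_def)
  thus ?case by simp
next
  case (insert a S)
  define q m where "q = p a" and "m = mS p S"
  have cop: "coprime q m" unfolding q_def m_def
    using coprime_mS[OF insert(1) _ insert.prems(2) insert(2)] insert.prems(1) by auto
  have qJ: "J \<le> q" and q0: "0 < q" using insert.prems unfolding q_def by (auto simp: prime_gt_0_nat)
  have m0: "0 < m" unfolding m_def using insert.prems by (auto intro: mS_pos)
  have period: "mS p (insert a S) = q * m" unfolding mS_def m_def q_def using insert(1,2) by simp
  have good_ins: "good p J (insert a S) h \<longleftrightarrow> h mod q < J \<and> good p J S (h mod m)" for h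
    unfolding m_def good_mod[OF insert(1)] by (simp add: good_def q_def)
  have "card {h. h < mS p (insert a S) \<and> good p J (insert a S) h}
      = card {h\<in>{..<q * m}. (\<lambda>(r, g). r < J \<and> good p J S g) (h mod q, h mod m)}"
    unfolding period good_ins by (rule arg_cong[where f=card]) auto
  also have "\<dots> = card {z\<in>{..<q} \<times> {..<m}. (\<lambda>(r, g). r < J \<and> good p J S g) z}"
    by (rule card_bij_betw_Collect[OF crt_bij[OF cop q0 m0]])
  also have "{z\<in>{..<q} \<times> {..<m}. (\<lambda>(r, g). r < J \<and> good p J S g) z}
      = {..<J} \<times> {g. g < m \<and> good p J S g}" using qJ by auto
  also have "card \<dots> = J * J ^ card S"
    using insert.IH insert.prems by (auto simp: card_cartesian_product m_def intro: inj_on_subset)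
  finally show ?case using insert(1,2) by simp
qed

lemma count_periodic:
  assumes "0 < m" "\<And>h. P (h + m) = P h"
  shows "card {h. h < q * m + r \<and> P h} = q * card {h. h < m \<and> P h} + card {h. h < r \<and> P h}"
proof (induction q)
  case (Suc q)
  define X where "X = q * m + r"
  have eq: "{h. h < m + X \<and> P h} = {h. h < m \<and> P h} \<union> (\<lambda>h. h + m) ` {h. h < X \<and> P h}"
  proof (intro equalityI subsetI)
    fix h assume h: "h \<in> {h. h < m + X \<and> P h}"
    show "h \<in> {h. h < m \<and> P h} \<union> (\<lambda>h. h + m) ` {h. h < X \<and> P h}"
    proof (cases "h < m")
      case False
      hence "h = (h - m) + m" "h - m < X" "P (h - m)" using h assms(2)[of "h - m"] by auto
      thus ?thesis by blast
    qed (use h in auto)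
  qed (use assms(2) in auto)
  have "card {h. h < m + X \<and> P h} = card {h. h < m \<and> P h} + card ((\<lambda>h. h + m) ` {h. h < X \<and> P h})"
    unfolding eq by (rule card_Un_disjoint) auto
  also have "card ((\<lambda>h. h + m) ` {h. h < X \<and> P h}) = card {h. h < X \<and> P h}"
    by (rule card_image) (auto simp: inj_on_def)
  finally show ?case using Suc by (simp add: X_def algebra_simps)
qed simp

lemma count_good:
  assumes "finite S" "\<forall>t\<in>S. prime (p t) \<and> J \<le> p t" "inj_on p S"
  shows "\<bar>real (card {h. h < N \<and> good p J S h}) - real N * real J ^ card S / real (mS p S)\<bar>
           \<le> real J ^ card S"
proof -
  define m where "m = mS p S"
  define q r where "q = N div m" and "r = N mod m"
  define D where "D = card {h. h < m \<and> good p J S h}"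
  define c where "c = card {h. h < r \<and> good p J S h}"
  have m0: "0 < m" unfolding m_def using assms by (auto intro: mS_pos)
  have N: "N = q * m + r" unfolding q_def r_def by simp
  have D: "D = J ^ card S" unfolding D_def m_def using crt_count[OF assms] .
  have cnt: "card {h. h < N \<and> good p J S h} = q * D + c"
    unfolding N D_def c_def
    by (rule count_periodic[OF m0]) (use good_periodic[OF assms(1)] in \<open>simp add: m_def\<close>)
  have rm: "r < m" unfolding r_def using m0 by simp
  have "c \<le> D" unfolding c_def D_def by (rule card_mono) (use rm in auto)
  moreover have "real N * real D / real m = real q * real D + real r * real D / real m"
    unfolding N using m0 by (simp add: field_simps)
  moreover have "0 \<le> real r * real D / real m" "real r * real D / real m \<le> real D"
    using m0 rm by (simp_all add: field_simps mult_left_mono)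
  moreover have "real c \<le> real D" using \<open>c \<le> D\<close> by simp
  ultimately have bound: "\<bar>real (q * D + c) - real N * real D / real m\<bar> \<le> real D"
    unfolding of_nat_add of_nat_mult abs_le_iff by linarith
  have Dr: "real J ^ card S = real D" using D by simp
  show ?thesis using bound unfolding cnt m_def[symmetric] Dr .
qed

section \<open>The weighted sieve\<close>

text \<open>Numbers \<open>h\<close> that land in the first \<open>J\<close> residue classes modulo at most \<open>k\<close> of the
  primes are detected by the weights \<open>x\<^sub>h(t) = (1 - z)\<cdot>[h mod p t < J]\<close>: then
  \<open>\<Prod>(1 - x\<^sub>h) = z\<^sup>#\<^sup>h\<^sup>i\<^sup>t\<^sup>s \<ge> z\<^sup>k\<close>, and Bonferroni bounds the product from above.\<close>

lemma sieve_weight: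
  fixes z :: real
  assumes A: "finite A" and z: "0 < z" "z \<le> 1" and n: "odd n"
  shows "0 \<le> bsum (\<lambda>t. (1 - z) * of_bool (P t)) A n"
    and "card {t\<in>A. P t} \<le> k \<Longrightarrow> 1 \<le> (1/z)^k * bsum (\<lambda>t. (1 - z) * of_bool (P t)) A n"
proof -
  have "(\<Prod>t\<in>A. 1 - (1 - z) * of_bool (P t)) = (\<Prod>t\<in>A. if P t then z else 1)"
    by (rule prod.cong) auto
  hence prod: "(\<Prod>t\<in>A. 1 - (1 - z) * of_bool (P t)) = z ^ card {t\<in>A. P t}"
    using prod.inter_filter[OF A, of "\<lambda>_. z" P] by simp
  have le: "z ^ card {t\<in>A. P t} \<le> bsum (\<lambda>t. (1 - z) * of_bool (P t)) A n"
    using bonferroni_odd(1)[OF A _ n, of "\<lambda>t. (1 - z) * of_bool (P t)"] z unfolding prod by simp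
  show "0 \<le> bsum (\<lambda>t. (1 - z) * of_bool (P t)) A n" using le z by (meson order_trans zero_le_power less_imp_le)
  assume "card {t\<in>A. P t} \<le> k"
  hence "z ^ k \<le> z ^ card {t\<in>A. P t}" using z by (intro power_decreasing) auto
  hence "1 \<le> (1/z)^k * z ^ card {t\<in>A. P t}" using z by (simp add: field_simps)
  also have "\<dots> \<le> (1/z)^k * bsum (\<lambda>t. (1 - z) * of_bool (P t)) A n"
    using le z by (intro mult_left_mono) auto
  finally show "1 \<le> (1/z)^k * bsum (\<lambda>t. (1 - z) * of_bool (P t)) A n" .
qed

lemma prod_const_mult_of_bool:
  fixes c :: real
  assumes "finite S"
  shows "(\<Prod>t\<in>S. c * of_bool (P t)) = c ^ card S * of_bool (\<forall>t\<in>S. P t)"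
  using assms by (induction S rule: finite_induct) auto

text \<open>Averaging a single Bonferroni term over \<open>h < N\<close>: the sum of \<open>\<Prod>\<^sub>t\<^sub>\<in>\<^sub>S x\<^sub>h(t)\<close> counts
  good residues, which the CRT count compares with the "expected" weight
  \<open>y t = w J / p t\<close>.\<close>

lemma average_esym:
  fixes w :: real and p :: "nat \<Rightarrow> nat"
  assumes A: "finite A" and pr: "\<forall>t\<in>A. prime (p t) \<and> J \<le> p t" and inj: "inj_on p A"
    and w: "0 \<le> w" "w \<le> 1"
  shows "(-1)^i * (\<Sum>h<N. esym (\<lambda>t. w * of_bool (h mod p t < J)) A i)
      \<le> (-1)^i * (real N * esym (\<lambda>t. w * real J / real (p t)) A i) + real (card A choose i) * real J ^ i"
proof -
  define Sub where "Sub = {S. S \<subseteq> A \<and> card S = i}"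
  have per_subset: "(-1)^i * (\<Sum>h<N. \<Prod>t\<in>S. w * of_bool (h mod p t < J))
      \<le> (-1)^i * (real N * (\<Prod>t\<in>S. w * real J / real (p t))) + real J ^ i" if "S \<in> Sub" for S
  proof -
    have S: "finite S" "card S = i" "\<forall>t\<in>S. prime (p t) \<and> J \<le> p t" "inj_on p S"
      using that A pr inj finite_subset inj_on_subset unfolding Sub_def by auto
    define E where "E = real (card {h. h < N \<and> good p J S h}) - real N * real J ^ i / real (mS p S)"
    have "(\<Sum>h<N. \<Prod>t\<in>S. w * of_bool (h mod p t < J)) = (\<Sum>h<N. w ^ i * of_bool (good p J S h))"
      using prod_const_mult_of_bool[OF S(1)] S(2) by (simp add: good_def)
    also have "\<dots> = w ^ i * real (card ({..<N} \<inter> {h. good p J S h}))"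
      by (simp flip: sum_distrib_left)
    also have "{..<N} \<inter> {h. good p J S h} = {h. h < N \<and> good p J S h}" by auto
    finally have "(\<Sum>h<N. \<Prod>t\<in>S. w * of_bool (h mod p t < J))
        = w ^ i * real (card {h. h < N \<and> good p J S h})" .
    moreover have "(\<Prod>t\<in>S. w * real J / real (p t)) = w ^ i * real J ^ i / real (mS p S)"
      using S(2) unfolding mS_def by (simp add: prod_dividef prod.distrib power_mult_distrib)
    moreover have "(-1)^i * w ^ i * E \<le> real J ^ i"
    proof -
      have "\<bar>(-1)^i * w ^ i * E\<bar> = w ^ i * \<bar>E\<bar>" using w by (simp add: abs_mult power_abs)
      also have "\<dots> \<le> 1 * real J ^ i"
        using count_good[OF S(1,3,4), of N] w S(2) unfolding E_def
        by (intro mult_mono) (auto simp: power_le_one)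
      finally show ?thesis by simp
    qed
    ultimately show ?thesis unfolding E_def by (simp add: algebra_simps)
  qed
  have "(-1)^i * (\<Sum>h<N. esym (\<lambda>t. w * of_bool (h mod p t < J)) A i)
      = (\<Sum>S\<in>Sub. (-1)^i * (\<Sum>h<N. \<Prod>t\<in>S. w * of_bool (h mod p t < J)))"
    unfolding esym_def Sub_def by (simp add: sum_distrib_left sum.swap[where A="{..<N}"])
  also have "\<dots> \<le> (\<Sum>S\<in>Sub. (-1)^i * (real N * (\<Prod>t\<in>S. w * real J / real (p t))) + real J ^ i)"
    by (rule sum_mono) (rule per_subset)
  also have "\<dots> = (-1)^i * (real N * esym (\<lambda>t. w * real J / real (p t)) A i) + real (card Sub) * real J ^ i"
    unfolding esym_def Sub_def by (simp add: sum.distrib sum_distrib_left)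
  finally show ?thesis unfolding Sub_def n_subsets[OF A] .
qed

lemma sieve_core:
  fixes z :: real and p :: "nat \<Rightarrow> nat"
  assumes A: "finite A" and pr: "\<forall>t\<in>A. prime (p t) \<and> J \<le> p t" and inj: "inj_on p A"
    and z: "0 < z" "z \<le> 1" and n: "odd n"
  shows "real (card {h. h < N \<and> card {t\<in>A. h mod p t < J} \<le> k}) \<le>
    (1/z)^k * (real N * ((\<Prod>t\<in>A. 1 - (1 - z) * real J / real (p t))
                          + esym (\<lambda>t. (1 - z) * real J / real (p t)) A n)
      + (\<Sum>i<n. real (card A choose i) * real J ^ i))"
proof -
  define x where "x h = (\<lambda>t. (1 - z) * of_bool (h mod p t < J))" for h
  define y where "y = (\<lambda>t. (1 - z) * real J / real (p t))"
  define G where "G = {h. h < N \<and> card {t\<in>A. h mod p t < J} \<le> k}"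
  have y: "0 \<le> y t \<and> y t \<le> 1" if "t \<in> A" for t
  proof -
    have "(1 - z) * real J \<le> 1 * real (p t)" using pr that z by (intro mult_mono) auto
    thus ?thesis using z pr that prime_gt_0_nat[of "p t"] by (simp add: y_def divide_le_eq_1)
  qed
  have "real (card G) = (\<Sum>h\<in>G. 1)" by simp
  also have "\<dots> \<le> (\<Sum>h\<in>G. (1/z)^k * bsum (x h) A n)"
    by (rule sum_mono) (use sieve_weight(2)[OF A z n] in \<open>auto simp: G_def x_def\<close>)
  also have "\<dots> \<le> (\<Sum>h<N. (1/z)^k * bsum (x h) A n)"
    by (rule sum_mono2) (use sieve_weight(1)[OF A z n] z in \<open>auto simp: G_def x_def\<close>)
  also have "(\<Sum>h<N. bsum (x h) A n) \<le> real N * bsum y A n + (\<Sum>i<n. real (card A choose i) * real J ^ i)"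
  proof -
    have "(\<Sum>h<N. bsum (x h) A n) = (\<Sum>i<n. (-1)^i * (\<Sum>h<N. esym (x h) A i))"
      unfolding bsum_def by (simp add: sum_distrib_left sum.swap[where A="{..<N}"])
    also have "\<dots> \<le> (\<Sum>i<n. (-1)^i * (real N * esym y A i) + real (card A choose i) * real J ^ i)"
      by (rule sum_mono) (use average_esym[OF A pr inj, of "1 - z"] z in \<open>simp add: x_def y_def\<close>)
    finally show ?thesis by (simp add: bsum_def sum.distrib sum_distrib_left algebra_simps)
  qed
  hence "(\<Sum>h<N. (1/z)^k * bsum (x h) A n)
      \<le> (1/z)^k * (real N * bsum y A n + (\<Sum>i<n. real (card A choose i) * real J ^ i))"
    using z by (simp add: sum_distrib_left[symmetric] mult_left_mono)
  also have "\<dots> \<le> (1/z)^k * (real N * ((\<Prod>t\<in>A. 1 - y t) + esym y A n)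
      + (\<Sum>i<n. real (card A choose i) * real J ^ i))"
    using bonferroni_odd(2)[OF A y n] z by (intro mult_left_mono add_right_mono) auto
  finally show ?thesis unfolding G_def y_def .
qed

section \<open>Elements of \<open>H\<close> hit few residue classes\<close>

text \<open>If \<open>h \<in> H\<close>, then for each \<open>j < J = 2ML\<^sup>2\<close> at most \<open>j\<close> of the primes have
  \<open>h mod p\<^sub>t = j\<close>: any \<open>j + 1\<close> of them would give a set \<open>I\<close> with \<open>h \<equiv> |I| - 1 (mod m\<^sub>I)\<close>
  by the Chinese remainder theorem, which the definition of \<open>H\<close> excludes.\<close>

lemma Hset_residue_class_card:
  assumes pr: "\<forall>t\<in>{1..T}. prime (p t)" and inj: "inj_on p {1..T}"
    and h: "int h \<in> Hset K x M L p T" and j: "j < 2 * M * L^2"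
  shows "card {t\<in>{1..T}. h mod p t = j} \<le> j"
proof (rule ccontr)
  assume "\<not> card {t\<in>{1..T}. h mod p t = j} \<le> j"
  then obtain I where I: "I \<subseteq> {t\<in>{1..T}. h mod p t = j}" "card I = Suc j"
    by (meson not_less_eq_eq obtain_subset_with_card_n)
  have IT: "I \<subseteq> {1..T}" using I by auto
  have "[int h = int j] (mod (\<Prod>t\<in>I. int (p t)))"
  proof (rule cong_cong_prod_coprime)
    show "\<forall>t\<in>I. [int h = int j] (mod int (p t))"
      using I(1) by (auto simp: cong_def zmod_int[symmetric] mod_mod_trivial)
    show "\<forall>a\<in>I. \<forall>b\<in>I. a \<noteq> b \<longrightarrow> coprime (int (p a)) (int (p b))"
      using inj pr IT unfolding inj_on_def by (metis coprime_int_iff primes_coprime subsetD)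
  qed
  hence "[int h = int (card I) - 1] (mod mI p I)" unfolding mI_def I(2) by simp
  thus False using h IT I(2) j unfolding Hset_def by auto
qed

lemma card_less_eq_sum:
  assumes "finite A"
  shows "card {t\<in>A. f t < (J::nat)} = (\<Sum>j<J. card {t\<in>A. f t = j})"
proof -
  have "{t\<in>A. f t < J} = (\<Union>j\<in>{..<J}. {t\<in>A. f t = j})" by auto
  also have "card \<dots> = (\<Sum>j<J. card {t\<in>A. f t = j})"
    by (rule card_UN_disjoint) (use assms in auto)
  finally show ?thesis .
qed

lemma card_Hset_le_few_hits:
  fixes K :: int and x :: real and M L T :: nat and p :: "nat \<Rightarrow> nat"
  assumes pr: "\<forall>t\<in>{1..T}. prime (p t)" and inj: "inj_on p {1..T}"
  defines "G \<equiv> {h. h < nat \<lfloor>real_of_int K * ln x\<rfloor> + 1 \<and>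
            card {t\<in>{1..T}. h mod p t < 2 * M * L^2} \<le> (2 * M * L^2) * (2 * M * L^2)}"
  shows "card (Hset K x M L p T) \<le> card G"
proof -
  have "Hset K x M L p T \<subseteq> int ` G"
  proof
    fix h assume hH: "h \<in> Hset K x M L p T"
    define J where "J = 2 * M * L^2"
    have h0: "0 \<le> h" and hle: "real_of_int h \<le> real_of_int K * ln x"
      using hH unfolding Hset_def by auto
    have "h \<le> \<lfloor>real_of_int K * ln x\<rfloor>" using hle by (simp add: le_floor_iff)
    hence hnat: "int (nat h) \<in> Hset K x M L p T" "nat h < nat \<lfloor>real_of_int K * ln x\<rfloor> + 1"
      using hH h0 by auto
    have "card {t\<in>{1..T}. nat h mod p t < J} = (\<Sum>j<J. card {t\<in>{1..T}. nat h mod p t = j})"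
      by (rule card_less_eq_sum) simp
    also have "\<dots> \<le> (\<Sum>j<J. J)"
      by (rule sum_mono) (use Hset_residue_class_card[OF pr inj hnat(1)] in \<open>force simp: J_def\<close>)
    finally show "h \<in> int ` G"
      using h0 hnat(2) unfolding J_def G_def by (auto intro!: image_eqI[of _ _ "nat h"])
  qed
  hence "card (Hset K x M L p T) \<le> card (int ` G)" by (rule card_mono[rotated]) (simp add: G_def)
  also have "\<dots> \<le> card G" by (rule card_image_le) (simp add: G_def)
  finally show ?thesis .
qed

section \<open>Analytic estimates\<close>

lemma ln_one_minus_inverse_bounds:
  fixes q :: real
  assumes "2 \<le> q"
  shows "1/q \<le> - ln (1 - 1/q)" "- ln (1 - 1/q) \<le> 1/q + (1/q) / (q - 1)"
proof -
  have "ln (1 - 1/q) \<le> (1 - 1/q) - 1" by (rule ln_le_minus_one) (use assms in simp)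
  thus "1/q \<le> - ln (1 - 1/q)" by simp
  have "- ln (1 - 1/q) = ln (q / (q - 1))"
    using assms by (simp add: ln_div field_simps)
  also have "\<dots> \<le> q / (q - 1) - 1" by (rule ln_le_minus_one) (use assms in simp)
  also have "\<dots> = 1/q + (1/q) / (q - 1)" using assms by (simp add: field_simps)
  finally show "- ln (1 - 1/q) \<le> 1/q + (1/q) / (q - 1)" .
qed

text \<open>A Mertens-type converse: if \<open>\<Prod>(1 - 1/q\<^sub>t)\<^sup>-\<^sup>1\<close> is within a factor \<open>2\<close> of \<open>e\<^sup>\<lambda>\<close> and all
  \<open>q\<^sub>t \<ge> \<lambda> + 2\<close>, then \<open>\<Sum>1/q\<^sub>t\<close> lies in \<open>[\<lambda> - 2, \<lambda> + 1]\<close>, because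
  \<open>-log(1 - 1/q) = 1/q + O(1/q\<^sup>2)\<close>.\<close>

lemma recip_sum_bounds:
  fixes q :: "'a \<Rightarrow> real"
  assumes A: "finite A" and q: "\<And>t. t \<in> A \<Longrightarrow> lam + 2 \<le> q t" and lam: "0 \<le> lam"
    and lo: "(1/2) * exp lam \<le> (\<Prod>t\<in>A. inverse (1 - 1 / q t))"
    and up: "(\<Prod>t\<in>A. inverse (1 - 1 / q t)) \<le> (3/2) * exp lam"
  shows "lam - 2 \<le> (\<Sum>t\<in>A. 1 / q t)" "(\<Sum>t\<in>A. 1 / q t) \<le> lam + 1"
proof -
  define P where "P = (\<Prod>t\<in>A. inverse (1 - 1 / q t))"
  define \<sigma> where "\<sigma> = (\<Sum>t\<in>A. 1 / q t)"
  have q2: "2 \<le> q t" if "t \<in> A" for t using q[OF that] lam by linarith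
  have "ln P = (\<Sum>t\<in>A. ln (inverse (1 - 1 / q t)))"
    unfolding P_def by (rule ln_prod[OF A]) (use q2 in fastforce)
  hence lnP: "ln P = (\<Sum>t\<in>A. - ln (1 - 1 / q t))" by (simp add: ln_inverse)
  have P0: "0 < P" using lo exp_gt_zero[of lam] unfolding P_def[symmetric] by linarith
  have "ln P \<le> ln ((3/2) * exp lam)"
    using up P0 unfolding P_def[symmetric] by (subst ln_le_cancel_iff) auto
  also have "\<dots> = ln (3/2) + lam" by (subst ln_mult) auto
  also have "\<dots> \<le> lam + 1" using ln_le_minus_one[of "3/2::real"] by simp
  finally have P_up: "ln P \<le> lam + 1" .
  have "ln ((1/2) * exp lam) \<le> ln P"
    using lo P0 unfolding P_def[symmetric] by (subst ln_le_cancel_iff) auto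
  moreover have "ln ((1/2) * exp lam) \<ge> lam - 1"
    using ln_le_minus_one[of "2::real"] by (simp add: ln_mult ln_div)
  ultimately have P_lo: "lam - 1 \<le> ln P" by linarith
  have sig_up: "\<sigma> \<le> ln P" unfolding lnP \<sigma>_def
    by (rule sum_mono) (use q2 ln_one_minus_inverse_bounds in auto)
  have "ln P \<le> (\<Sum>t\<in>A. 1 / q t + (1 / q t) / (lam + 1))"
    unfolding lnP
  proof (rule sum_mono)
    fix t assume t: "t \<in> A"
    have "(1 / q t) / (q t - 1) \<le> (1 / q t) / (lam + 1)"
      using q[OF t] q2[OF t] lam by (intro divide_left_mono) auto
    thus "- ln (1 - 1 / q t) \<le> 1 / q t + (1 / q t) / (lam + 1)"
      using ln_one_minus_inverse_bounds(2)[OF q2[OF t]] by linarith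
  qed
  also have "\<dots> = \<sigma> + \<sigma> / (lam + 1)" unfolding \<sigma>_def by (simp add: sum.distrib sum_divide_distrib)
  finally have "ln P \<le> \<sigma> + \<sigma> / (lam + 1)" .
  moreover have "\<sigma> / (lam + 1) \<le> 1" using sig_up P_up lam by (simp add: divide_le_eq_1)
  ultimately show "lam - 2 \<le> \<sigma>" "\<sigma> \<le> lam + 1" using P_lo sig_up P_up by linarith+
qed

lemma prod_one_minus_le_exp:
  fixes y :: "'a \<Rightarrow> real"
  assumes "finite A" "\<And>t. t \<in> A \<Longrightarrow> y t \<le> 1"
  shows "(\<Prod>t\<in>A. 1 - y t) \<le> exp (- (\<Sum>t\<in>A. y t))"
proof -
  have "(\<Prod>t\<in>A. 1 - y t) \<le> (\<Prod>t\<in>A. exp (- y t))"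
  proof (rule prod_mono)
    fix t assume "t \<in> A"
    thus "0 \<le> 1 - y t \<and> 1 - y t \<le> exp (- y t)"
      using assms(2)[of t] exp_ge_add_one_self[of "- y t"] by simp
  qed
  also have "\<dots> = exp (- (\<Sum>t\<in>A. y t))" by (simp add: exp_sum[OF assms(1), symmetric] sum_negf)
  finally show ?thesis .
qed

lemma binomial_weight_sum_le:
  assumes "1 \<le> real T * real J"
  shows "(\<Sum>i<n. real (T choose i) * real J ^ i) \<le> real n * (real T * real J) ^ n"
proof -
  have "real (T choose i) * real J ^ i \<le> (real T * real J) ^ n" if "i < n" for i
  proof -
    have "T choose i \<le> T ^ i" by (cases "i \<le> T") (auto simp: binomial_le_pow binomial_eq_0)
    hence "real (T choose i) * real J ^ i \<le> real T ^ i * real J ^ i"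
      by (intro mult_right_mono) (auto simp flip: of_nat_power)
    also have "\<dots> \<le> (real T * real J) ^ n"
      using that assms by (simp add: power_increasing flip: power_mult_distrib)
    finally show ?thesis .
  qed
  hence "(\<Sum>i<n. real (T choose i) * real J ^ i) \<le> (\<Sum>i<n. (real T * real J) ^ n)"
    by (intro sum_mono) auto
  thus ?thesis by simp
qed

lemma card_le_of_inj_bounded:
  fixes p :: "'a \<Rightarrow> nat"
  assumes "inj_on p A" "\<And>t. t \<in> A \<Longrightarrow> 1 \<le> p t \<and> real (p t) \<le> Q" "0 \<le> Q"
  shows "real (card A) \<le> Q"
proof -
  have "p ` A \<subseteq> {1..nat \<lfloor>Q\<rfloor>}" using assms(2) by (force simp: le_nat_floor)
  hence "card (p ` A) \<le> nat \<lfloor>Q\<rfloor>" using card_mono[of "{1..nat \<lfloor>Q\<rfloor>}"] by fastforce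
  thus ?thesis using card_image[OF assms(1)] assms(3) by linarith
qed

lemma exp_constant_bound:
  assumes "L \<le> J" "2 \<le> J"
  shows "2 * exp (2 * real L + 2 * real J) + 3 \<le> 3 * (8 * real J) ^ (2 * J * J)"
proof -
  have "exp (2 * real L + 2 * real J) \<le> exp 1 ^ (4 * J)"
    using assms(1) by (simp add: exp_of_nat_mult[symmetric])
  also have "\<dots> \<le> 3 ^ (4 * J)" using exp_le by (intro power_mono) auto
  also have "\<dots> = 81 ^ J" by (simp add: power_mult)
  moreover have "(81::real) ^ 1 \<le> 81 ^ J" using assms(2) by (intro power_increasing) auto
  ultimately have "2 * exp (2 * real L + 2 * real J) + 3 \<le> 3 * 81 ^ J" by simp
  also have "\<dots> \<le> 256 ^ J"
  proof -
    obtain j where j: "J = Suc j" using assms(2) by (cases J) auto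
    have "(81::real) ^ j \<le> 256 ^ j" by (intro power_mono) auto
    moreover have "0 \<le> (81::real) ^ j" by simp
    ultimately have "243 * 81 ^ j \<le> 256 * (256::real) ^ j" by linarith
    thus ?thesis unfolding j by simp
  qed
  also have "\<dots> = 16 ^ (2 * J)" by (simp add: power_mult)
  also have "\<dots> \<le> (8 * real J) ^ (2 * J)" using assms(2) by (intro power_mono) auto
  also have "\<dots> \<le> (8 * real J) ^ (2 * J * J)" using assms(2) by (intro power_increasing) auto
  finally show ?thesis using exp_gt_zero[of "2 * real L + 2 * real J"] by linarith
qed

lemma truncation_level_ge:
  fixes B s :: real
  assumes "0 \<le> B" "B \<le> s"
  shows "8 * s + B \<le> real (2 * nat \<lceil>9 * s\<rceil> + 1)"
  using assms by linarith

text \<open>With \<open>z = 1/u\<close>, truncation level \<open>n \<approx> 18J(\<lambda> + 1)\<close> and \<open>\<Sum>1/p\<^sub>t \<in> [\<lambda> - 2, \<lambda> + 1]\<close>, each of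
  the three terms of the sieve bound is \<open>O(e\<^sup>-\<^sup>J\<^sup>\<lambda>)\<close> (times \<open>N\<close>): the main term because
  \<open>\<Prod>(1 - y\<^sub>t) \<le> e\<^sup>-\<^sup>\<Sigma>\<^sup>y\<close>, the Bonferroni tail by \<open>esym_le_exp\<close>, and the CRT errors by the
  hypothesis \<open>err\<close>.\<close>

lemma sieve_terms_small:
  fixes p :: "nat \<Rightarrow> nat" and J L n :: nat and u lam N :: real
  defines "y \<equiv> \<lambda>t. (1 - 1/u) * real J / real (p t)" and "E \<equiv> exp (- (real J * lam))"
  assumes A: "finite A" "A \<noteq> {}" and pr: "\<forall>t\<in>A. prime (p t) \<and> J \<le> p t"
    and u: "1 \<le> u" and lam: "0 \<le> lam" and J: "2 \<le> J"
    and Jlam: "real J * lam = 2 * real L * u"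
    and sig: "lam - 2 \<le> (\<Sum>t\<in>A. 1 / real (p t))" "(\<Sum>t\<in>A. 1 / real (p t)) \<le> lam + 1"
    and err: "real n * (real (card A) * real J) ^ n * exp (real J * lam) \<le> N"
    and n: "n = 2 * nat \<lceil>9 * real J * (lam + 1)\<rceil> + 1"
  shows "\<forall>t\<in>A. 0 \<le> y t \<and> y t \<le> 1"
    and "(\<Prod>t\<in>A. 1 - y t) \<le> E * exp (2 * real L + 2 * real J)" "esym y A n \<le> E"
    and "(\<Sum>i<n. real (card A choose i) * real J ^ i) \<le> N * E"
proof -
  define z where "z = 1 / u"
  have z: "0 < z" "z \<le> 1" using u unfolding z_def by auto
  have p0: "0 < real (p t)" if "t \<in> A" for t using pr that prime_gt_0_nat by auto
  have y: "0 \<le> y t \<and> y t \<le> 1" if "t \<in> A" for t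
  proof -
    have "(1 - z) * real J \<le> 1 * real (p t)" using pr that z by (intro mult_mono) auto
    thus ?thesis using z p0[OF that] by (simp add: y_def z_def divide_le_eq_1)
  qed
  thus "\<forall>t\<in>A. 0 \<le> y t \<and> y t \<le> 1" by blast
  have sumy: "(\<Sum>t\<in>A. y t) = (1 - z) * real J * (\<Sum>t\<in>A. 1 / real (p t))"
    unfolding y_def z_def by (simp add: sum_distrib_left)
  show "(\<Prod>t\<in>A. 1 - y t) \<le> E * exp (2 * real L + 2 * real J)"
  proof -
    have "real J * lam - 2 * real L - 2 * real J \<le> (1 - z) * real J * (lam - 2)"
      using Jlam u z J by (simp add: z_def field_simps)
    also have "\<dots> \<le> (\<Sum>t\<in>A. y t)" unfolding sumy using sig(1) z by (intro mult_left_mono) auto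
    finally have "exp (- (\<Sum>t\<in>A. y t)) \<le> E * exp (2 * real L + 2 * real J)"
      by (simp add: E_def flip: exp_add)
    thus ?thesis using prod_one_minus_le_exp[OF A(1), of y] y by fastforce
  qed
  show "esym y A n \<le> E"
  proof (unfold E_def, rule esym_le_exp[OF A(1)])
    show "(\<Sum>t\<in>A. y t) \<le> real J * (lam + 1)"
      unfolding sumy using z sig(2) lam
      by (intro mult_mono mult_left_le_one_le) (auto intro: sum_nonneg)
    show "8 * (real J * (lam + 1)) + real J * lam \<le> real n"
      unfolding n using truncation_level_ge[of "real J * lam" "real J * (lam + 1)"] lam
      by (simp add: algebra_simps)
  qed (use y in auto)
  show "(\<Sum>i<n. real (card A choose i) * real J ^ i) \<le> N * E"
  proof -
    have "1 * 1 \<le> real (card A) * real J"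
      using A J by (intro mult_mono) (auto simp: Suc_le_eq card_gt_0_iff)
    hence "(\<Sum>i<n. real (card A choose i) * real J ^ i) \<le> real n * (real (card A) * real J) ^ n"
      by (intro binomial_weight_sum_le) simp
    also have "\<dots> \<le> N * E" using err by (simp add: E_def exp_minus field_simps)
    finally show ?thesis .
  qed
qed

text \<open>The sieve bound with the parameters of the theorem: allowing \<open>J\<^sup>2\<close> hits costs a factor
  \<open>z^(-J\<^sup>2) = u^(J\<^sup>2)\<close>, and the three terms are bounded by \<open>sieve_terms_small\<close>.\<close>

lemma sieve_bound_explicit:
  fixes p :: "nat \<Rightarrow> nat" and u lam N :: real
  assumes A: "finite A" "A \<noteq> {}" and pr: "\<forall>t\<in>A. prime (p t) \<and> J \<le> p t" and inj: "inj_on p A"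
    and u: "1 \<le> u" and lam: "0 \<le> lam" and J: "2 \<le> J" "L \<le> J"
    and Jlam: "real J * lam = 2 * real L * u"
    and sig: "lam - 2 \<le> (\<Sum>t\<in>A. 1 / real (p t))" "(\<Sum>t\<in>A. 1 / real (p t)) \<le> lam + 1"
    and N: "1 \<le> N"
    and err: "real n * (real (card A) * real J) ^ n * exp (real J * lam) \<le> N"
    and n: "n = 2 * nat \<lceil>9 * real J * (lam + 1)\<rceil> + 1"
  shows "real (card {h. h < nat \<lfloor>N\<rfloor> + 1 \<and> card {t\<in>A. h mod p t < J} \<le> J * J})
           \<le> 3 * ((8 * real J) ^ (2 * J * J) * u ^ (J * J) / exp (real J * lam)) * N"
proof -
  define y where "y = (\<lambda>t. (1 - 1/u) * real J / real (p t))"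
  define E where "E = exp (- (real J * lam))"
  note terms = sieve_terms_small[OF A pr u lam J(1) Jlam sig err n, folded y_def E_def]
  have z: "0 < 1/u" "1/u \<le> 1" using u by auto
  have "odd n" unfolding n by simp
  note core = sieve_core[OF A(1) pr inj z this, of "nat \<lfloor>N\<rfloor> + 1" "J * J"]
  have N0: "real (nat \<lfloor>N\<rfloor> + 1) \<le> 2 * N" using N by linarith
  have nonneg: "0 \<le> (\<Prod>t\<in>A. 1 - y t)" "0 \<le> esym y A n"
    using terms(1) by (auto simp: esym_def y_def intro!: prod_nonneg sum_nonneg)
  have E0: "0 \<le> E" unfolding E_def by simp
  have "real (nat \<lfloor>N\<rfloor> + 1) * ((\<Prod>t\<in>A. 1 - y t) + esym y A n)
        + (\<Sum>i<n. real (card A choose i) * real J ^ i)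
      \<le> 2 * N * (E * exp (2 * real L + 2 * real J) + E) + N * E"
    using N0 terms(2-4) nonneg unfolding y_def by (intro add_mono mult_mono) auto
  also have "\<dots> = N * E * (2 * exp (2 * real L + 2 * real J) + 3)" by (simp add: algebra_simps)
  also have "\<dots> \<le> N * E * (3 * (8 * real J) ^ (2 * J * J))"
    using exp_constant_bound[OF J(2,1)] N E0 by (intro mult_left_mono) auto
  finally have "(1/(1/u)) ^ (J * J) * (real (nat \<lfloor>N\<rfloor> + 1) * ((\<Prod>t\<in>A. 1 - y t) + esym y A n)
        + (\<Sum>i<n. real (card A choose i) * real J ^ i))
      \<le> u ^ (J * J) * (N * E * (3 * (8 * real J) ^ (2 * J * J)))"
    using u by (simp add: mult_left_mono)
  hence "real (card {h. h < nat \<lfloor>N\<rfloor> + 1 \<and> card {t\<in>A. h mod p t < J} \<le> J * J})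
      \<le> u ^ (J * J) * (N * E * (3 * (8 * real J) ^ (2 * J * J)))"
    using core unfolding y_def by linarith
  also have "\<dots> = 3 * ((8 * real J) ^ (2 * J * J) * u ^ (J * J) / exp (real J * lam)) * N"
    unfolding E_def by (simp add: exp_minus field_simps)
  finally show ?thesis .
qed

lemma bound_shape:
  fixes Q :: real and M L :: nat
  defines "J \<equiv> 2 * M * L^2" and "lam \<equiv> ln (ln Q) / (real M * real L)"
  assumes "1 \<le> M" "1 \<le> L" "0 < ln Q"
  shows "real J * lam = 2 * real L * ln (ln Q)"
    and "(16 * real M * real L^2) ^ (8 * M^2 * L^4) * (ln (ln Q)) ^ (4 * M^2 * L^4) / (ln Q) ^ (2 * L)
       = (8 * real J) ^ (2 * J * J) * (ln (ln Q)) ^ (J * J) / exp (real J * lam)"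
proof -
  show Jlam: "real J * lam = 2 * real L * ln (ln Q)"
    unfolding J_def lam_def using assms by (simp add: field_simps power2_eq_square)
  have "(ln Q) ^ (2 * L) = exp (ln (ln Q)) ^ (2 * L)" using assms by simp
  also have "\<dots> = exp (real J * lam)"
    unfolding Jlam by (simp add: exp_of_nat_mult[symmetric] algebra_simps)
  moreover have "(16 * real M * real L^2) ^ (8 * M^2 * L^4) = (8 * real J) ^ (2 * J * J)"
    "(ln (ln Q)) ^ (4 * M^2 * L^4) = (ln (ln Q)) ^ (J * J)"
    unfolding J_def by (simp_all add: eval_nat_numeral algebra_simps)
  ultimately show "(16 * real M * real L^2) ^ (8 * M^2 * L^4) * (ln (ln Q)) ^ (4 * M^2 * L^4) / (ln Q) ^ (2 * L)
       = (8 * real J) ^ (2 * J * J) * (ln (ln Q)) ^ (J * J) / exp (real J * lam)" by simp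
qed

text \<open>All hypotheses of the theorem, with the requirement "\<open>x\<close> large" replaced by the
  explicit side conditions it is used for: \<open>log log Q \<ge> 1\<close>, the lower end \<open>Y\<close> of the
  prime range exceeds \<open>J + \<lambda> + 2\<close>, and \<open>K log x\<close> dominates the CRT error term.\<close>

lemma Hset_bound_explicit:
  fixes K :: int and x Q Y :: real and M L T :: nat and p :: "nat \<Rightarrow> nat"
  defines "J \<equiv> 2 * M * L^2" and "lam \<equiv> ln (ln Q) / (real M * real L)"
  assumes M: "1 \<le> M" and L: "1 \<le> L" and lnQ: "0 < ln Q" and u: "1 \<le> ln (ln Q)"
    and primes: "\<forall>t\<in>{1..T}. prime (p t) \<and> Y \<le> real (p t) \<and> real (p t) \<le> Q"
    and Y: "real J + lam + 2 \<le> Y"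
    and inj: "inj_on p {1..T}" and T: "J^2 \<le> T"
    and lo: "(1/2) * (ln Q) powr (1 / (real M * real L)) \<le> (\<Prod>t\<in>{1..T}. inverse (1 - 1 / real (p t)))"
    and up: "(\<Prod>t\<in>{1..T}. inverse (1 - 1 / real (p t))) \<le> (3/2) * (ln Q) powr (1 / (real M * real L))"
    and N: "1 \<le> real_of_int K * ln x"
    and err: "real (2 * nat \<lceil>9 * real J * (lam + 1)\<rceil> + 1) * (Q * real J) ^ (2 * nat \<lceil>9 * real J * (lam + 1)\<rceil> + 1)
        * exp (real J * lam) \<le> real_of_int K * ln x"
  shows "real (card (Hset K x M L p T)) \<le>
          3 * ((16 * real M * real L^2) ^ (8 * M^2 * L^4) * (ln (ln Q)) ^ (4 * M^2 * L^4)
               / (ln Q) ^ (2 * L)) * (real_of_int K * ln x)"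
proof -
  define n where "n = 2 * nat \<lceil>9 * real J * (lam + 1)\<rceil> + 1"
  define A where "A = {1..T}"
  have J: "2 \<le> J" "L \<le> J" using M L unfolding J_def by (auto simp: power2_eq_square)
  have lam: "0 \<le> lam" using u unfolding lam_def by simp
  note shape = bound_shape[OF M L lnQ, folded J_def lam_def]
  have pY: "real J + lam + 2 \<le> real (p t)" if "t \<in> A" for t
  proof -
    have "Y \<le> real (p t)" using primes that unfolding A_def by blast
    thus ?thesis using Y by linarith
  qed
  have pr: "\<forall>t\<in>A. prime (p t) \<and> J \<le> p t"
  proof
    fix t assume t: "t \<in> A"
    have "real J \<le> real (p t)" using pY[OF t] lam by linarith
    thus "prime (p t) \<and> J \<le> p t" using primes t unfolding A_def by simp
  qed
  have "1 \<le> J^2" using J by simp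
  hence A: "finite A" "A \<noteq> {}" using T unfolding A_def by auto
  have pl: "lam + 2 \<le> real (p t)" if "t \<in> A" for t using pY[OF that] by simp
  have "(ln Q) powr (1 / (real M * real L)) = exp lam"
    unfolding lam_def powr_def using lnQ by simp
  hence "(1/2) * exp lam \<le> (\<Prod>t\<in>A. inverse (1 - 1 / real (p t)))"
    "(\<Prod>t\<in>A. inverse (1 - 1 / real (p t))) \<le> (3/2) * exp lam"
    using lo up unfolding A_def by simp_all
  note sig = recip_sum_bounds[of A lam "\<lambda>t. real (p t)", OF A(1) pl lam this]
  have Q: "0 \<le> Q" using A(2) primes unfolding A_def by fastforce
  have "real (card A) \<le> Q"
    by (rule card_le_of_inj_bounded[of p, OF _ _ Q]) (use inj primes prime_ge_1_nat in \<open>auto simp: A_def\<close>)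
  hence "(real (card A) * real J) ^ n \<le> (Q * real J) ^ n"
    by (intro power_mono mult_right_mono) auto
  hence "real n * (real (card A) * real J) ^ n * exp (real J * lam) \<le> real_of_int K * ln x"
    using err unfolding n_def[symmetric]
    by (meson exp_ge_zero mult_left_mono mult_right_mono of_nat_0_le_iff order_trans)
  note explicit = sieve_bound_explicit[OF A pr inj[folded A_def] _ lam J shape(1) sig N this n_def]
  have "card (Hset K x M L p T)
      \<le> card {h. h < nat \<lfloor>real_of_int K * ln x\<rfloor> + 1 \<and> card {t\<in>A. h mod p t < J} \<le> J * J}"
    using card_Hset_le_few_hits[where K=K and x=x and M=M and L=L, OF _ inj] primes
    unfolding A_def J_def by auto
  thus ?thesis using explicit u unfolding shape(2) by simp
qed

section \<open>Size of the parameters for large \<open>x\<close>\<close>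

text \<open>Everything is expressed through \<open>v = log log log x\<close>: then \<open>log x = exp (exp v)\<close>,
  \<open>log Q = exp ((1 - \<epsilon>) v)\<close> and \<open>L \<le> 2 v^(1/3)\<close>.\<close>

lemma iterated_logs:
  fixes x v0 :: real
  assumes "exp (exp (exp v0)) \<le> x"
  shows "v0 \<le> ln (ln (ln x))" "ln x = exp (exp (ln (ln (ln x))))"
    and "ln (Qpar eps x) = exp ((1 - eps) * ln (ln (ln x)))"
proof -
  have "0 < x" using assms exp_gt_zero less_le_trans by blast
  hence lx: "exp (exp v0) \<le> ln x" using assms by (simp add: ln_ge_iff)
  hence "0 < ln x" using exp_gt_zero less_le_trans by blast
  hence llx: "exp v0 \<le> ln (ln x)" using lx by (simp add: ln_ge_iff)
  hence llx0: "0 < ln (ln x)" using exp_gt_zero less_le_trans by blast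
  show "v0 \<le> ln (ln (ln x))" using llx llx0 by (simp add: ln_ge_iff)
  show "ln x = exp (exp (ln (ln (ln x))))" using \<open>0 < ln x\<close> llx0 by simp
  show "ln (Qpar eps x) = exp ((1 - eps) * ln (ln (ln x)))"
    unfolding Qpar_def powr_def using llx0 by simp
qed

lemma parameter_sizes:
  fixes eps v u :: real and M L :: nat
  assumes eps: "0 < eps" and v: "1 \<le> v" and M: "1 \<le> M"
    and L: "L = nat \<lfloor>v powr (1/3 - eps)\<rfloor> + 1" and u: "5/6 * v \<le> u" "u \<le> v"
  shows "(v powr (1/3)) ^ 3 = v" "1 \<le> v powr (1/3)"
    and "real (2 * M * L^2) \<le> 8 * real M * (v powr (1/3))^2"
    and "(v powr (1/3))^2 / (3 * real M) \<le> u / (real M * real L)" "u / (real M * real L) \<le> v"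
    and "real (2 * M * L^2) \<le> 8 * real M * v"
proof -
  define a where "a = v powr (1/3)"
  show a3: "a ^ 3 = v" unfolding a_def using v by (simp add: powr_realpow[symmetric] powr_powr)
  show a1: "1 \<le> a" unfolding a_def using v by (intro ge_one_powr_ge_zero) auto
  have L1: "1 \<le> real L" unfolding L by simp
  have La: "real L \<le> 2 * a"
  proof -
    have "v powr (1/3 - eps) \<le> a" unfolding a_def using eps v by (intro powr_mono) auto
    moreover have "real L \<le> v powr (1/3 - eps) + 1" unfolding L by (simp add: of_nat_nat)
    ultimately show ?thesis using a1 by linarith
  qed
  have "real L ^ 2 \<le> (2 * a)^2" using La L1 by (intro power_mono) auto
  hence "real M * real L ^ 2 \<le> real M * (4 * a^2)" by (intro mult_left_mono) (auto simp: power_mult_distrib)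
  thus J: "real (2 * M * L^2) \<le> 8 * real M * a^2" by simp
  have "a^2 \<le> a^3" using a1 by (intro power_increasing) auto
  hence "8 * real M * a^2 \<le> 8 * real M * v" using a3 by (intro mult_left_mono) auto
  thus "real (2 * M * L^2) \<le> 8 * real M * v" using J by linarith
  have "1 * 1 \<le> real M * real L" using M L1 by (intro mult_mono) auto
  hence ML1: "1 \<le> real M * real L" by simp
  have u1: "0 < u" using u v by linarith
  have "u / (real M * real L) \<le> u / 1" using ML1 u1 by (intro divide_left_mono) auto
  thus "u / (real M * real L) \<le> v" using u by simp
  have "a^2 / (3 * real M) \<le> u / (real M * (2 * a))"
  proof -
    have "a^2 * (real M * (2 * a)) = real M * (2 * v)"
      using a3 by (simp add: power3_eq_cube power2_eq_square algebra_simps)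
    also have "\<dots> \<le> real M * (3 * u)" using u by (intro mult_left_mono) auto
    finally show ?thesis using M a1 by (simp add: divide_le_eq le_divide_eq algebra_simps)
  qed
  also have "\<dots> \<le> u / (real M * real L)"
    using La M L1 u1 by (intro divide_left_mono mult_left_mono mult_pos_pos) auto
  finally show "a^2 / (3 * real M) \<le> u / (real M * real L)" .
qed

text \<open>The primes are \<open>\<ge> exp ((log Q)^(4/(ML))) = exp (exp (4\<lambda>))\<close>, far above \<open>J + \<lambda> + 2\<close>: the latter is
  \<open>O(M v)\<close>, whereas \<open>(4\<lambda>)\<^sup>3/6 \<ge> 32 v\<^sup>2 / (81 M\<^sup>3)\<close>.\<close>

lemma prime_floor_condition:
  fixes a lam :: real and M J :: nat
  assumes a1: "1 \<le> a" and M: "1 \<le> M" and v: "891 * real M^4 \<le> 32 * a^3"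
    and J: "real J \<le> 8 * real M * a^2"
    and lam: "a^2 / (3 * real M) \<le> lam" "lam \<le> a^3"
  shows "real J + lam + 2 \<le> exp (exp (4 * lam))"
proof -
  have M1: "1 \<le> real M" using M by simp
  have "real J + lam + 2 \<le> 11 * real M * a^3"
  proof -
    have "8 * real M * a^2 \<le> 8 * real M * a^3" using a1 M by (intro mult_left_mono power_increasing) auto
    moreover have "1 * a^3 \<le> real M * a^3" using M1 a1 by (intro mult_right_mono) auto
    moreover have "1 * 1 \<le> real M * a^3" using M1 a1 by (intro mult_mono) auto
    ultimately show ?thesis using J lam(2) by linarith
  qed
  also have "\<dots> \<le> 32 * (a^3)^2 / (81 * real M^3)"
  proof -
    have "11 * real M * a^3 * (81 * real M^3) = (891 * real M^4) * a^3"
      by (simp add: power4_eq_xxxx power3_eq_cube algebra_simps)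
    also have "\<dots> \<le> (32 * a^3) * a^3" using v a1 by (intro mult_right_mono) auto
    finally show ?thesis using M1 by (simp add: le_divide_eq power2_eq_square algebra_simps)
  qed
  also have "\<dots> = (4 * (a^2 / (3 * real M)))^3 / 6"
    by (simp add: power_mult_distrib power_divide power_mult[symmetric] field_simps)
  also have "\<dots> \<le> (4 * lam)^3 / 6" using lam(1) by (intro divide_right_mono power_mono) auto
  also have "\<dots> \<le> exp (4 * lam)"
    using power_div_fact_le_exp[of "4 * lam" 3] lam(1) order_trans[OF _ lam(1)]
    by (simp add: fact_numeral)
  also have "\<dots> \<le> exp (exp (4 * lam))"
  proof -
    have "4 * lam \<le> exp (4 * lam)" using exp_ge_add_one_self[of "4 * lam"] by linarith
    thus ?thesis by simp
  qed
  finally show ?thesis .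
qed

text \<open>A polynomial in \<open>v\<close> is eventually below \<open>e\<^sup>\<epsilon>\<^sup>v\<close>; explicitly, via \<open>e\<^sup>y \<ge> y\<^sup>4/24\<close>.\<close>

lemma poly_le_exp_eps:
  fixes eps v :: real and M :: nat
  assumes "0 < eps" "0 \<le> v" "72000 * real M^2 / eps^4 \<le> v"
  shows "3000 * real M^2 * v^3 \<le> exp (eps * v)"
proof -
  have "72000 * real M^2 \<le> v * eps^4" using assms by (simp add: divide_le_eq)
  hence "72000 * real M^2 * v^3 \<le> v * eps^4 * v^3" using assms by (intro mult_right_mono) auto
  also have "\<dots> = (eps * v)^4" by (simp add: power_mult_distrib eval_nat_numeral algebra_simps)
  finally have "3000 * real M^2 * v^3 \<le> (eps * v)^4 / fact 4" by (simp add: fact_numeral)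
  also have "\<dots> \<le> exp (eps * v)" using assms by (intro power_div_fact_le_exp) auto
  finally show ?thesis .
qed

lemma truncation_level_le:
  fixes v lam :: real and M J :: nat
  assumes v: "2 \<le> v" and M: "1 \<le> M" and J: "real J \<le> 8 * real M * v"
    and lam: "0 \<le> lam" "lam \<le> v"
  shows "real (2 * nat \<lceil>9 * real J * (lam + 1)\<rceil> + 1) \<le> 291 * real M * v^2"
proof -
  have "0 \<le> 9 * real J * (lam + 1)" using lam by simp
  hence "real (2 * nat \<lceil>9 * real J * (lam + 1)\<rceil> + 1) \<le> 2 * (9 * real J * (lam + 1)) + 3" by linarith
  also have "9 * real J * (lam + 1) \<le> 9 * (8 * real M * v) * (2 * v)"
    using J lam v by (intro mult_mono) auto
  finally have "real (2 * nat \<lceil>9 * real J * (lam + 1)\<rceil> + 1) \<le> 288 * (real M * v^2) + 3"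
    by (simp add: power2_eq_square algebra_simps)
  moreover have "1 \<le> v^2" using v by (simp add: one_le_power)
  hence "1 * 1 \<le> real M * v^2" using M by (intro mult_mono) auto
  ultimately show ?thesis by linarith
qed

text \<open>The CRT error term \<open>n (QJ)\<^sup>n exp (J\<lambda>)\<close> with \<open>n = O(Mv\<^sup>2)\<close>, \<open>log Q = exp ((1 - \<epsilon>) v)\<close>, \<open>J = O(Mv)\<close>
  has logarithm \<open>O(M\<^sup>2 v\<^sup>3 exp ((1 - \<epsilon>) v)) \<le> exp v = log log x\<close>, so it is at most \<open>log x\<close>.\<close>

lemma error_condition:
  fixes eps v lam Q :: real and M J :: nat
  defines "n \<equiv> 2 * nat \<lceil>9 * real J * (lam + 1)\<rceil> + 1"
  assumes eps: "0 < eps" "eps < 1" and v: "2 \<le> v" and M: "1 \<le> M"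
    and J: "1 \<le> J" "real J \<le> 8 * real M * v" and lam: "0 \<le> lam" "lam \<le> v"
    and Q: "0 < Q" "ln Q = exp ((1 - eps) * v)" and poly: "3000 * real M^2 * v^3 \<le> exp (eps * v)"
  shows "real n * (Q * real J) ^ n * exp (real J * lam) \<le> exp (exp v)"
proof -
  define E where "E = exp ((1 - eps) * v)"
  have E1: "1 \<le> E" unfolding E_def using eps v by simp
  have J1: "1 \<le> real J" using J by simp
  have "1 * 1 \<le> real M * v" using M v by (intro mult_mono) auto
  hence Mv1: "1 \<le> real M * v" by simp
  have n1: "1 \<le> real n" unfolding n_def by simp
  have n_le: "real n \<le> 291 * real M * v^2"
    unfolding n_def using truncation_level_le[OF v M J(2) lam] .
  define X where "X = ln (real n) + real n * ln (Q * real J) + real J * lam"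
  have LHS: "real n * (Q * real J) ^ n * exp (real J * lam) = exp X"
  proof -
    have "(Q * real J) ^ n = exp (ln (Q * real J)) ^ n" using Q(1) J1 by simp
    also have "\<dots> = exp (real n * ln (Q * real J))" by (rule exp_of_nat_mult[symmetric])
    finally show ?thesis using n1 unfolding X_def by (simp add: exp_add)
  qed
  have "ln (Q * real J) \<le> E + real J"
    using Q J1 ln_le_minus_one[of "real J"] by (simp add: ln_mult E_def)
  hence "real n * ln (Q * real J) \<le> real n * (E + real J)" using n1 by (intro mult_left_mono) auto
  moreover have "ln (real n) \<le> real n" using ln_le_minus_one[of "real n"] n1 by linarith
  moreover have "real J * lam \<le> real J * v" using lam by (intro mult_left_mono) auto
  ultimately have "X \<le> real n * (1 + E + real J) + real J * v"
    unfolding X_def by (simp add: algebra_simps)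
  also have "\<dots> \<le> (291 * real M * v^2) * (10 * (real M * v * E)) + 8 * real M^2 * v^3 * E"
  proof -
    have "1 * 1 \<le> (real M * v) * E" "1 * E \<le> (real M * v) * E" "(real M * v) * 1 \<le> (real M * v) * E"
      using Mv1 E1 v by (intro mult_mono; simp)+
    hence W: "1 \<le> real M * v * E" "E \<le> real M * v * E" "real M * v \<le> real M * v * E" by simp_all
    hence "1 + E + real J \<le> 10 * (real M * v * E)" using J by linarith
    hence "real n * (1 + E + real J) \<le> (291 * real M * v^2) * (10 * (real M * v * E))"
      using n_le n1 E1 J1 by (intro mult_mono) auto
    moreover have "real J * v \<le> 8 * real M^2 * v^3 * E"
    proof -
      have "real J * v \<le> (8 * real M * v) * v" using J v by (intro mult_right_mono) auto
      also have "\<dots> = (8 * real M * v) * v * 1" by simp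
      also have "\<dots> \<le> (8 * real M * v) * v * (real M * v * E)" using W(1) v by (intro mult_left_mono) auto
      finally show ?thesis by (simp add: power2_eq_square power3_eq_cube algebra_simps)
    qed
    ultimately show ?thesis by linarith
  qed
  also have "\<dots> \<le> 3000 * real M^2 * v^3 * E"
    using E1 v by (simp add: power2_eq_square power3_eq_cube algebra_simps)
  also have "\<dots> \<le> exp (eps * v) * E" using poly E1 by (intro mult_right_mono) auto
  also have "\<dots> = exp v" unfolding E_def by (simp add: exp_add[symmetric] algebra_simps)
  finally show ?thesis unfolding LHS by simp
qed

lemma Hset_bound_large_x:
  fixes K :: int and eps x :: real and T :: nat and p :: "nat \<Rightarrow> nat"
  defines "M \<equiv> Mpar K" and "L \<equiv> Lpar eps x" and "Q \<equiv> Qpar eps x"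
  assumes eps: "0 < eps" "eps < 1/6" and K: "2 \<le> K"
    and x: "exp (exp (exp (512 * real M^4 + 72000 * real M^2 / eps^4 + 2))) \<le> x"
    and primes: "\<forall>t\<in>{1..T}. prime (p t) \<and>
          exp ((ln Q) powr (4 / (real M * real L))) \<le> real (p t) \<and> real (p t) \<le> Q"
    and inj: "inj_on p {1..T}" and T: "(2 * M * L^2)^2 \<le> T"
    and lo: "(1/2) * (ln Q) powr (1 / (real M * real L)) \<le> (\<Prod>t\<in>{1..T}. inverse (1 - 1 / real (p t)))"
    and up: "(\<Prod>t\<in>{1..T}. inverse (1 - 1 / real (p t))) \<le> (3/2) * (ln Q) powr (1 / (real M * real L))"
  shows "real (card (Hset K x M L p T)) \<le>
          3 * ((16 * real M * real L^2) ^ (8 * M^2 * L^4) * (ln (ln Q)) ^ (4 * M^2 * L^4)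
               / (ln Q) ^ (2 * L)) * (real_of_int K * ln x)"
proof -
  define v where "v = ln (ln (ln x))"
  define u where "u = (1 - eps) * v"
  define lam where "lam = u / (real M * real L)"
  define J where "J = 2 * M * L^2"
  have M: "1 \<le> M" unfolding M_def Mpar_def by simp
  have L: "1 \<le> L" unfolding L_def Lpar_def by simp
  have v0: "512 * real M^4 + 72000 * real M^2 / eps^4 + 2 \<le> v"
    and lnx: "ln x = exp (exp v)" and lnQ: "ln Q = exp u"
    using iterated_logs[OF x] unfolding v_def u_def Q_def by auto
  have "0 \<le> 72000 * real M^2 / eps^4" "0 \<le> real M^4" by simp_all
  hence v: "2 \<le> v" "891 * real M^4 \<le> 32 * v" "72000 * real M^2 / eps^4 \<le> v"
    using v0 by linarith+
  have "0 \<le> eps * v" "eps * v \<le> (1/6) * v" using eps v by (auto intro: mult_right_mono)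
  moreover have "u = v - eps * v" unfolding u_def by (simp add: algebra_simps)
  ultimately have u: "5/6 * v \<le> u" "u \<le> v" "1 \<le> u" using v by linarith+
  have Leq: "L = nat \<lfloor>v powr (1/3 - eps)\<rfloor> + 1" unfolding L_def Lpar_def v_def ..
  have "1 \<le> v" using v by simp
  note sizes = parameter_sizes[OF eps(1) this M Leq u(1,2), folded lam_def J_def]
  have lnlnQ: "ln (ln Q) = u" using lnQ by simp
  have lam0: "0 \<le> lam" unfolding lam_def using u by simp
  have "(ln Q) powr (4 / (real M * real L)) = exp (4 * lam)"
    unfolding powr_def lam_def using lnQ lnlnQ by simp
  hence Y: "real J + lam + 2 \<le> exp ((ln Q) powr (4 / (real M * real L)))"
    using prime_floor_condition[where a="v powr (1/3)" and lam=lam and M=M and J=J] sizes v M by simp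
  have lnx1: "1 \<le> ln x" unfolding lnx by simp
  hence "1 * 1 \<le> real_of_int K * ln x" using K by (intro mult_mono) auto
  hence N: "1 \<le> real_of_int K * ln x" by simp
  have "real (2 * nat \<lceil>9 * real J * (lam + 1)\<rceil> + 1) * (Q * real J) ^ (2 * nat \<lceil>9 * real J * (lam + 1)\<rceil> + 1)
        * exp (real J * lam) \<le> ln x"
    unfolding lnx
    by (rule error_condition) (use eps v M L u sizes lnQ lam0 poly_le_exp_eps[OF eps(1) _ v(3)]
        in \<open>auto simp: J_def Q_def Qpar_def u_def\<close>)
  also have "\<dots> \<le> real_of_int K * ln x" using K lnx1 by (simp add: mult_le_cancel_right1)
  finally have err: "real (2 * nat \<lceil>9 * real J * (lam + 1)\<rceil> + 1) * (Q * real J) ^ (2 * nat \<lceil>9 * real J * (lam + 1)\<rceil> + 1)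
        * exp (real J * lam) \<le> real_of_int K * ln x" .
  have "0 < ln Q" "1 \<le> ln (ln Q)" using lnQ lnlnQ u by simp_all
  from Hset_bound_explicit[OF M L this primes _ inj T lo up N] Y err
  show ?thesis unfolding J_def lam_def lnlnQ by simp
qed

theorem lemma2p5:
  fixes K :: int
  assumes "K \<ge> 2"
  shows "\<exists>eps0>0. \<forall>eps. 0 < eps \<and> eps < eps0 \<longrightarrow>
    (\<exists>C>0. \<exists>x0. \<forall>x\<ge>x0. \<forall>(T::nat) (p::nat \<Rightarrow> nat).
      (let L = Lpar eps x; Q = Qpar eps x; M = Mpar K in
        (\<forall>t\<in>{1..T}. prime (p t) \<and>
            exp ((ln Q) powr (4 / (real M * real L))) \<le> real (p t) \<and> real (p t) \<le> Q) \<and>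
        inj_on p {1..T} \<and>
        T \<ge> (2 * M * L^2)^2 \<and>
        (1/2) * (ln Q) powr (1 / (real M * real L)) \<le> (\<Prod>t\<in>{1..T}. inverse (1 - 1 / real (p t))) \<and>
        (\<Prod>t\<in>{1..T}. inverse (1 - 1 / real (p t))) \<le> (3/2) * (ln Q) powr (1 / (real M * real L))
        \<longrightarrow>
        real (card (Hset K x M L p T)) \<le>
          C * ((16 * real M * real L^2) ^ (8 * M^2 * L^4) * (ln (ln Q)) ^ (4 * M^2 * L^4)
               / (ln Q) ^ (2 * L)) * (real_of_int K * ln x)))"
proof (rule exI[of _ "1/6"], intro conjI allI impI)
  fix eps :: real assume eps: "0 < eps \<and> eps < 1/6"
  show "\<exists>C>0. \<exists>x0. \<forall>x\<ge>x0. \<forall>(T::nat) (p::nat \<Rightarrow> nat).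
      (let L = Lpar eps x; Q = Qpar eps x; M = Mpar K in
        (\<forall>t\<in>{1..T}. prime (p t) \<and>
            exp ((ln Q) powr (4 / (real M * real L))) \<le> real (p t) \<and> real (p t) \<le> Q) \<and>
        inj_on p {1..T} \<and> T \<ge> (2 * M * L^2)^2 \<and>
        (1/2) * (ln Q) powr (1 / (real M * real L)) \<le> (\<Prod>t\<in>{1..T}. inverse (1 - 1 / real (p t))) \<and>
        (\<Prod>t\<in>{1..T}. inverse (1 - 1 / real (p t))) \<le> (3/2) * (ln Q) powr (1 / (real M * real L))
        \<longrightarrow>
        real (card (Hset K x M L p T)) \<le>
          C * ((16 * real M * real L^2) ^ (8 * M^2 * L^4) * (ln (ln Q)) ^ (4 * M^2 * L^4)
               / (ln Q) ^ (2 * L)) * (real_of_int K * ln x))"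
    unfolding Let_def
    using Hset_bound_large_x[of eps K] eps assms
    by (intro exI[of _ "3::real"] conjI
        exI[of _ "exp (exp (exp (512 * real (Mpar K)^4 + 72000 * real (Mpar K)^2 / eps^4 + 2)))"]) auto
qed simp

end
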